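(* Let $q$ be a prime power, $\mu$ a positive integer, and $S$ a minimal $(1,\mu)$-saturating set in $PG(2,q)$. Then (i) $\mu\le (q+1)\binom{q}{2}$; (ii) $|S|\le q+\mu+1$ if $\mu\le q+2$, and $|S|\le \min\{q+\mu,\;q^2+q\}$ if $\mu\ge q+3$.
   Context: $PG(2,q)$ is the projective plane over $\mathbb{F}_q$. For a point set $S$, a secant of $S$ is a line $\ell$ with $|\ell\cap S|\ge2$, counted with multiplicity $\binom{|\ell\cap S|}{2}$. A set $S$ of points of $PG(2,q)$ is $(1,\mu)$-saturating if (M1) $S$ spans $PG(2,q)$, (M2) $S\neq PG(2,q)$, and (M3) every point $Q\notin S$ lies on secants of $S$ whose multiplicities sum to at least $\mu$. A $(1,\mu)$-saturating set of size $n$ is minimal if it does not contain a $(1,\mu)$-saturating set of size $n-1$. *)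

theory Defs
  imports Main
begin

text \<open>Projective plane PG(2,q) over a finite field 'a with q = CARD('a).
  A point is a 1-dimensional subspace minus zero, i.e. the set of nonzero
  scalar multiples of a nonzero vector of 'a^3 (represented as triples).\<close>

definition pg_points :: "('a::field \<times> 'a \<times> 'a) set set" where
  "pg_points = { {(c*x, c*y, c*z) | c. c \<noteq> 0} | x y z. (x, y, z) \<noteq> (0, 0, 0)}"

definition pg_lines :: "('a::field \<times> 'a \<times> 'a) set set set" where
  "pg_lines = { {P \<in> pg_points. \<forall>(x, y, z) \<in> P. a*x + b*y + c*z = 0} | a b c.
                 (a, b, c) \<noteq> (0, 0, 0)}"

text \<open>S spans PG(2,q): S is not contained in any proper subspace, i.e. in no line
  (points and the empty set lie in lines).\<close>

definition pg_spans :: "('a::field \<times> 'a \<times> 'a) set set \<Rightarrow> bool" where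
  "pg_spans S \<longleftrightarrow> \<not> (\<exists>l \<in> pg_lines. S \<subseteq> l)"

definition secant_mult :: "('a::field \<times> 'a \<times> 'a) set set \<Rightarrow> ('a \<times> 'a \<times> 'a) set \<Rightarrow> nat" where
  "secant_mult S Q = (\<Sum>l \<in> {l \<in> pg_lines. Q \<in> l \<and> card (l \<inter> S) \<ge> 2}. card (l \<inter> S) choose 2)"

definition saturating :: "nat \<Rightarrow> ('a::field \<times> 'a \<times> 'a) set set \<Rightarrow> bool" where
  "saturating \<mu> S \<longleftrightarrow> S \<subseteq> pg_points \<and> pg_spans S \<and> S \<noteq> pg_points \<and>
     (\<forall>Q \<in> pg_points - S. secant_mult S Q \<ge> \<mu>)"

definition minimal_saturating :: "nat \<Rightarrow> ('a::field \<times> 'a \<times> 'a) set set \<Rightarrow> bool" where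
  "minimal_saturating \<mu> S \<longleftrightarrow> saturating \<mu> S \<and>
     \<not> (\<exists>T \<subseteq> S. saturating \<mu> T \<and> card T = card S - 1)"

end

(* A point of PG(2,q) is a class of q - 1 nonzero vectors, so counting vectors gives q^2 + q + 1
   points, at most q + 1 points on a line and, dually, at most q + 1 lines through a point.
   For a point Q outside a point set T, the lines through Q cover T; if they meet T in k_l points,
   then |T| <= sum k_l <= sum (binom(k_l, 2) + 1) <= secant_mult T Q + q + 1, and the bound improves
   to secant_mult T Q + q once |T| >= 2q + 3, because then some line meets T in at least 3 points.
   So removing a point from a (1,mu)-saturating set with more than q + mu + 1 points (more than
   q + mu points if mu >= q + 3) leaves a (1,mu)-saturating set, contradicting minimality.
   Part (i) holds because each line through a point Q outside S meets S in at most q points. *)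

theory Submission
  imports Defs "HOL-Library.Cardinality"
begin

section \<open>Homogeneous coordinates\<close>

fun scale3 :: "'a::times \<Rightarrow> 'a \<times> 'a \<times> 'a \<Rightarrow> 'a \<times> 'a \<times> 'a" where
  "scale3 c (x, y, z) = (c * x, c * y, c * z)"

fun dot3 :: "'a::comm_semiring \<times> 'a \<times> 'a \<Rightarrow> 'a \<times> 'a \<times> 'a \<Rightarrow> 'a" where
  "dot3 (a, b, c) (x, y, z) = a * x + b * y + c * z"

fun cross3 :: "'a::comm_ring \<times> 'a \<times> 'a \<Rightarrow> 'a \<times> 'a \<times> 'a \<Rightarrow> 'a \<times> 'a \<times> 'a" where
  "cross3 (u1, u2, u3) (v1, v2, v3) = (u2 * v3 - u3 * v2, u3 * v1 - u1 * v3, u1 * v2 - u2 * v1)"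

definition point_of :: "'a::field \<times> 'a \<times> 'a \<Rightarrow> ('a \<times> 'a \<times> 'a) set" where
  "point_of v = {scale3 c v | c. c \<noteq> 0}"

definition line_of :: "'a::field \<times> 'a \<times> 'a \<Rightarrow> ('a \<times> 'a \<times> 'a) set set" where
  "line_of w = {P \<in> pg_points. \<forall>v \<in> P. dot3 w v = 0}"

lemma dot3_commute: "dot3 u v = dot3 v u"
  by (cases u; cases v) (simp add: mult.commute)

lemma dot3_scale3_left: "dot3 (scale3 c w) v = c * dot3 w v"
  by (cases w; cases v) (simp add: algebra_simps)

lemma dot3_scale3_right: "dot3 w (scale3 c v) = c * dot3 w v"
  by (cases w; cases v) (simp add: algebra_simps)

lemma scale3_scale3: "scale3 (c::'a::semigroup_mult) (scale3 d v) = scale3 (c * d) v"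
  by (cases v) (simp add: mult.assoc)

lemma scale3_one [simp]: "scale3 (1::'a::monoid_mult) v = v"
  by (cases v) simp

lemma scale3_eq_0_iff:
  "scale3 (c::'a::semiring_no_zero_divisors) v = (0, 0, 0) \<longleftrightarrow> c = 0 \<or> v = (0, 0, 0)"
  by (cases v) auto

lemma point_of_triple: "point_of (x, y, z) = {(c * x, c * y, c * z) | c. c \<noteq> 0}"
  by (simp add: point_of_def)

lemma pg_points_eq: "pg_points = point_of ` {v. v \<noteq> (0, 0, 0)}"
proof (intro set_eqI iffI)
  fix P :: "('a \<times> 'a \<times> 'a) set"
  assume "P \<in> pg_points"
  then obtain x y z where "(x, y, z) \<noteq> (0, 0, 0)" "P = point_of (x, y, z)"
    unfolding pg_points_def point_of_triple by blast
  then show "P \<in> point_of ` {v. v \<noteq> (0, 0, 0)}" by blast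
next
  fix P :: "('a \<times> 'a \<times> 'a) set"
  assume "P \<in> point_of ` {v. v \<noteq> (0, 0, 0)}"
  then obtain x y z where "(x, y, z) \<noteq> (0, 0, 0)" "P = point_of (x, y, z)" by auto
  then show "P \<in> pg_points"
    unfolding pg_points_def point_of_triple by blast
qed

lemma line_of_triple:
  "line_of (a, b, c) = {P \<in> pg_points. \<forall>(x, y, z) \<in> P. a * x + b * y + c * z = 0}"
  unfolding line_of_def by (intro Collect_cong conj_cong refl ball_cong) auto

lemma pg_lines_eq: "pg_lines = line_of ` {w. w \<noteq> (0, 0, 0)}"
proof (intro set_eqI iffI)
  fix l :: "('a \<times> 'a \<times> 'a) set set"
  assume "l \<in> pg_lines"
  then obtain a b c where "(a, b, c) \<noteq> (0, 0, 0)" "l = line_of (a, b, c)"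
    unfolding pg_lines_def line_of_triple by blast
  then show "l \<in> line_of ` {w. w \<noteq> (0, 0, 0)}" by blast
next
  fix l :: "('a \<times> 'a \<times> 'a) set set"
  assume "l \<in> line_of ` {w. w \<noteq> (0, 0, 0)}"
  then obtain a b c where "(a, b, c) \<noteq> (0, 0, 0)" "l = line_of (a, b, c)" by auto
  then show "l \<in> pg_lines"
    unfolding pg_lines_def line_of_triple by blast
qed

lemma mem_point_of: "v \<in> point_of u \<longleftrightarrow> (\<exists>c. c \<noteq> 0 \<and> v = scale3 c u)"
  by (auto simp: point_of_def)

lemma self_mem_point_of: "v \<in> point_of v"
  unfolding mem_point_of by (rule exI[of _ 1]) simp

lemma point_of_scale3:
  assumes "c \<noteq> 0"
  shows "point_of (scale3 c v) = point_of v"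
proof (intro set_eqI iffI)
  fix u assume "u \<in> point_of (scale3 c v)"
  then obtain d where "d \<noteq> 0" "u = scale3 (d * c) v"
    by (auto simp: mem_point_of scale3_scale3)
  moreover have "d * c \<noteq> 0" using assms \<open>d \<noteq> 0\<close> by simp
  ultimately show "u \<in> point_of v" unfolding mem_point_of by blast
next
  fix u assume "u \<in> point_of v"
  then obtain d where "d \<noteq> 0" "u = scale3 d v" by (auto simp: mem_point_of)
  moreover have "scale3 d v = scale3 (d / c) (scale3 c v)"
    using assms by (simp add: scale3_scale3)
  moreover have "d / c \<noteq> 0" using assms \<open>d \<noteq> 0\<close> by simp
  ultimately show "u \<in> point_of (scale3 c v)" unfolding mem_point_of by metis
qed

lemma pg_points_eq_point_of:
  assumes "P \<in> pg_points" "v \<in> P"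
  shows "P = point_of v" and "v \<noteq> (0, 0, 0)"
proof -
  obtain u where u: "u \<noteq> (0, 0, 0)" "P = point_of u"
    using assms(1) unfolding pg_points_eq by blast
  then obtain c where c: "c \<noteq> 0" "v = scale3 c u"
    using assms(2) by (auto simp: mem_point_of)
  show "P = point_of v"
    using u(2) c(2) point_of_scale3[OF c(1), of u] by simp
  show "v \<noteq> (0, 0, 0)"
    using u(1) c scale3_eq_0_iff[of c u] by simp
qed

lemma point_of_in_pg_points: "v \<noteq> (0, 0, 0) \<Longrightarrow> point_of v \<in> pg_points"
  unfolding pg_points_eq by blast

lemma pg_points_disjoint:
  assumes "P \<in> pg_points" "R \<in> pg_points" "P \<noteq> R"
  shows "P \<inter> R = {}"
proof (rule ccontr)
  assume "P \<inter> R \<noteq> {}"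
  then obtain v where "v \<in> P" "v \<in> R" by blast
  then have "P = point_of v" "R = point_of v"
    using assms(1,2) by (simp_all add: pg_points_eq_point_of(1))
  with assms(3) show False by simp
qed

lemma point_of_mem_line_of:
  assumes "v \<noteq> (0, 0, 0)"
  shows "point_of v \<in> line_of w \<longleftrightarrow> dot3 w v = 0"
proof
  assume "point_of v \<in> line_of w"
  then show "dot3 w v = 0"
    using self_mem_point_of[of v] unfolding line_of_def by blast
next
  assume w: "dot3 w v = 0"
  have "dot3 w u = 0" if u: "u \<in> point_of v" for u
  proof -
    obtain c where "u = scale3 c v" using u unfolding mem_point_of by blast
    then show ?thesis by (simp add: dot3_scale3_right w)
  qed
  then show "point_of v \<in> line_of w"
    using point_of_in_pg_points[OF assms] unfolding line_of_def by blast
qed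

section \<open>Counting points and lines\<close>

lemma card_point_of:
  assumes "v \<noteq> (0, 0, 0)"
  shows "card (point_of (v :: 'a::{finite,field} \<times> 'a \<times> 'a)) = CARD('a) - 1"
proof -
  have "point_of v = (\<lambda>c. scale3 c v) ` (UNIV - {0})"
    by (auto simp: point_of_def)
  moreover have "inj_on (\<lambda>c. scale3 c v) (UNIV - {0})"
    using assms by (cases v) (auto intro!: inj_onI)
  ultimately show ?thesis by (simp add: card_image)
qed

lemma card_pg_point:
  assumes "P \<in> (pg_points :: ('a::{finite,field} \<times> 'a \<times> 'a) set set)"
  shows "card P = CARD('a) - 1"
proof -
  obtain v where "v \<noteq> (0, 0, 0)" "P = point_of v"
    using assms by (auto simp: pg_points_eq)
  then show ?thesis by (simp add: card_point_of)
qed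

lemma card_Union_pg_points:
  assumes "A \<subseteq> (pg_points :: ('a::{finite,field} \<times> 'a \<times> 'a) set set)"
  shows "card (\<Union>A) = card A * (CARD('a) - 1)"
proof -
  have "card (\<Union>A) = (\<Sum>P\<in>A. card P)"
    using assms pg_points_disjoint by (intro card_Union_disjoint) (auto simp: pairwise_def disjnt_def)
  also have "\<dots> = (\<Sum>P\<in>A. CARD('a) - 1)"
    using assms card_pg_point by (intro sum.cong) auto
  finally show ?thesis by simp
qed

lemma two_le_card_field: "2 \<le> CARD('a::{finite,field})"
proof -
  have "card {0, 1 :: 'a} \<le> CARD('a)" by (rule card_mono) simp_all
  then show ?thesis by simp
qed

lemma card_pg_points:
  "card (pg_points :: ('a::{finite,field} \<times> 'a \<times> 'a) set set) = CARD('a)^2 + CARD('a) + 1"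
proof -
  let ?q = "CARD('a)"
  have union: "\<Union>(pg_points :: ('a \<times> 'a \<times> 'a) set set) = UNIV - {(0, 0, 0)}"
  proof
    show "\<Union>pg_points \<subseteq> UNIV - {(0, 0, 0 :: 'a)}"
      using pg_points_eq_point_of(2) by blast
    show "UNIV - {(0, 0, 0 :: 'a)} \<subseteq> \<Union>pg_points"
      using self_mem_point_of point_of_in_pg_points by blast
  qed
  have "card (pg_points :: ('a \<times> 'a \<times> 'a) set set) * (?q - 1) = ?q^3 - 1"
    using card_Union_pg_points[where 'a='a, of pg_points] by (simp add: union power3_eq_cube)
  also have "\<dots> = (?q^2 + ?q + 1) * (?q - 1)"
    using two_le_card_field[where 'a='a]
    by (cases ?q) (simp_all add: power3_eq_cube power2_eq_square algebra_simps)
  finally show ?thesis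
    using two_le_card_field[where 'a='a] by (simp only: mult_right_cancel)
qed

lemma card_dot3_kernel_le:
  fixes w :: "'a::{finite,field} \<times> 'a \<times> 'a"
  assumes "w \<noteq> (0, 0, 0)"
  shows "card {v. dot3 w v = 0} \<le> CARD('a)^2"
proof -
  obtain a b c :: 'a where w: "w = (a, b, c)" by (rule prod_cases3)
  have "\<exists>f :: 'a \<times> 'a \<times> 'a \<Rightarrow> 'a \<times> 'a. inj_on f {v. dot3 w v = 0}"
  proof -
    consider "c \<noteq> 0" | "b \<noteq> 0" | "a \<noteq> 0" using assms w by auto
    then show ?thesis
    proof cases
      case 1
      then have "inj_on (\<lambda>(x, y, z). (x, y)) {v. dot3 w v = 0}"
        by (auto simp: w intro!: inj_onI) (metis add_left_cancel mult_left_cancel)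
      then show ?thesis by blast
    next
      case 2
      then have "inj_on (\<lambda>(x, y, z). (x, z)) {v. dot3 w v = 0}"
        by (auto simp: w intro!: inj_onI) (metis add_left_cancel add_right_cancel mult_left_cancel)
      then show ?thesis by blast
    next
      case 3
      then have "inj_on (\<lambda>(x, y, z). (y, z)) {v. dot3 w v = 0}"
        by (auto simp: w intro!: inj_onI) (metis add_right_cancel mult_left_cancel)
      then show ?thesis by blast
    qed
  qed
  then obtain f :: "'a \<times> 'a \<times> 'a \<Rightarrow> 'a \<times> 'a" where "inj_on f {v. dot3 w v = 0}" ..
  then have "card {v. dot3 w v = 0} \<le> CARD('a \<times> 'a)"
    by (rule card_inj_on_le) simp_all
  then show ?thesis by (simp add: power2_eq_square)
qed

lemma card_line_of_le:
  fixes w :: "'a::{finite,field} \<times> 'a \<times> 'a"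
  assumes "w \<noteq> (0, 0, 0)"
  shows "card (line_of w) \<le> CARD('a) + 1"
proof -
  let ?q = "CARD('a)"
  have "\<Union>(line_of w) \<subseteq> {v. dot3 w v = 0} - {(0, 0, 0)}"
    by (auto simp: line_of_def dest: pg_points_eq_point_of(2))
  then have "card (\<Union>(line_of w)) \<le> card ({v. dot3 w v = 0} - {(0, 0, 0)})"
    by (intro card_mono) simp_all
  also have "\<dots> = card {v. dot3 w v = 0} - 1"
    by (intro card_Diff_singleton) (cases w, simp)
  also have "\<dots> \<le> ?q^2 - 1"
    using card_dot3_kernel_le[OF assms] by linarith
  also have "\<dots> = (?q + 1) * (?q - 1)"
    by (simp add: power2_eq_square algebra_simps)
  finally have "card (line_of w) * (?q - 1) \<le> (?q + 1) * (?q - 1)"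
    by (simp add: card_Union_pg_points line_of_def)
  then show ?thesis
    using two_le_card_field[where 'a='a] by (simp only: mult_le_cancel2)
qed

lemma card_pg_line_le:
  fixes l :: "('a::{finite,field} \<times> 'a \<times> 'a) set set"
  assumes "l \<in> pg_lines"
  shows "card l \<le> CARD('a) + 1"
  using assms card_line_of_le unfolding pg_lines_eq by blast

definition dual_line :: "('a::field \<times> 'a \<times> 'a) set \<Rightarrow> ('a \<times> 'a \<times> 'a) set set" where
  "dual_line P = {R \<in> pg_points. \<forall>w \<in> P. \<forall>v \<in> R. dot3 w v = 0}"

lemma dual_line_point_of: "dual_line (point_of w) = line_of w"
proof -
  have "(\<forall>w' \<in> point_of w. \<forall>v \<in> R. dot3 w' v = 0) \<longleftrightarrow> (\<forall>v \<in> R. dot3 w v = 0)" for R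
  proof
    assume "\<forall>w' \<in> point_of w. \<forall>v \<in> R. dot3 w' v = 0"
    then show "\<forall>v \<in> R. dot3 w v = 0" using self_mem_point_of[of w] by blast
  next
    assume R: "\<forall>v \<in> R. dot3 w v = 0"
    show "\<forall>w' \<in> point_of w. \<forall>v \<in> R. dot3 w' v = 0"
    proof (intro ballI)
      fix w' v assume "w' \<in> point_of w" "v \<in> R"
      then obtain c where "w' = scale3 c w" unfolding mem_point_of by blast
      then show "dot3 w' v = 0" using R \<open>v \<in> R\<close> by (simp add: dot3_scale3_left)
    qed
  qed
  then show ?thesis by (simp add: dual_line_def line_of_def)
qed

lemma card_lines_through_le:
  fixes Q :: "('a::{finite,field} \<times> 'a \<times> 'a) set"
  assumes "Q \<in> pg_points"
  shows "card {l \<in> pg_lines. Q \<in> l} \<le> CARD('a) + 1"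
proof -
  obtain u where u: "u \<noteq> (0, 0, 0)" "Q = point_of u"
    using assms unfolding pg_points_eq by blast
  have "{l \<in> pg_lines. Q \<in> l} \<subseteq> dual_line ` line_of u"
  proof
    fix l assume "l \<in> {l \<in> pg_lines. Q \<in> l}"
    then obtain w where w: "w \<noteq> (0, 0, 0)" "l = line_of w" "Q \<in> line_of w"
      unfolding pg_lines_eq by blast
    then have "point_of w \<in> line_of u"
      using u by (simp add: point_of_mem_line_of dot3_commute)
    then show "l \<in> dual_line ` line_of u"
      by (rule rev_image_eqI) (simp add: w(2) dual_line_point_of)
  qed
  then have "card {l \<in> pg_lines. Q \<in> l} \<le> card (dual_line ` line_of u)"
    by (intro card_mono) simp_all
  also have "\<dots> \<le> card (line_of u)" by (rule card_image_le) simp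
  also have "\<dots> \<le> CARD('a) + 1" by (rule card_line_of_le[OF u(1)])
  finally show ?thesis .
qed

lemma dot3_cross3_left: "dot3 (cross3 u v) u = 0"
  by (cases u; cases v) (simp add: algebra_simps)

lemma dot3_cross3_right: "dot3 (cross3 u v) v = 0"
  by (cases u; cases v) (simp add: algebra_simps)

lemma cross3_eq_0_imp_scale3:
  fixes u v :: "'a::field \<times> 'a \<times> 'a"
  assumes "cross3 u v = (0, 0, 0)" "u \<noteq> (0, 0, 0)"
  shows "\<exists>k. v = scale3 k u"
proof -
  obtain u1 u2 u3 v1 v2 v3 where uv: "u = (u1, u2, u3)" "v = (v1, v2, v3)"
    by (cases u, cases v) auto
  have e: "u2 * v3 = u3 * v2" "u3 * v1 = u1 * v3" "u1 * v2 = u2 * v1"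
    using assms(1) by (simp_all add: uv)
  consider "u1 \<noteq> 0" | "u2 \<noteq> 0" | "u3 \<noteq> 0" using assms(2) uv by auto
  then show ?thesis
  proof cases
    case 1
    then have "v = scale3 (v1 / u1) u" using e by (simp add: uv field_simps)
    then show ?thesis ..
  next
    case 2
    then have "v = scale3 (v2 / u2) u" using e by (simp add: uv field_simps)
    then show ?thesis ..
  next
    case 3
    then have "v = scale3 (v3 / u3) u" using e by (simp add: uv field_simps)
    then show ?thesis ..
  qed
qed

lemma pg_line_through_two_points:
  assumes "Q \<in> pg_points" "R \<in> pg_points" "Q \<noteq> R"
  shows "\<exists>l \<in> pg_lines. Q \<in> l \<and> R \<in> (l :: ('a::field \<times> 'a \<times> 'a) set set)"
proof -
  obtain u v where u: "u \<noteq> (0, 0, 0)" "Q = point_of u" and v: "v \<noteq> (0, 0, 0)" "R = point_of v"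
    using assms(1,2) unfolding pg_points_eq by blast
  have "cross3 u v \<noteq> (0, 0, 0)"
  proof
    assume "cross3 u v = (0, 0, 0)"
    then obtain k where k: "v = scale3 k u" using cross3_eq_0_imp_scale3 u(1) by blast
    then have "k \<noteq> 0" using v(1) by (auto simp: scale3_eq_0_iff)
    then have "R = Q" using u v k by (simp add: point_of_scale3)
    with assms(3) show False by simp
  qed
  moreover have "Q \<in> line_of (cross3 u v)" "R \<in> line_of (cross3 u v)"
    using u v by (simp_all add: point_of_mem_line_of dot3_cross3_left dot3_cross3_right)
  ultimately show ?thesis unfolding pg_lines_eq by blast
qed

section \<open>Secants through a point\<close>

lemma le_choose_two_add_one: "k \<le> (k choose 2) + (1::nat)"
proof (cases k)
  case (Suc n)
  then have "k choose 2 = n + (n choose 2)" by (simp add: numeral_2_eq_2)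
  then show ?thesis using Suc by simp
qed simp

lemma less_choose_two_add_one:
  assumes "3 \<le> (k::nat)"
  shows "k < (k choose 2) + 1"
proof -
  obtain n where n: "k = Suc n" "2 \<le> n" using assms by (cases k) auto
  then have "k choose 2 = n + (n choose 2)" by (simp add: numeral_2_eq_2)
  moreover have "0 < n choose 2" using n(2) by simp
  ultimately show ?thesis using n(1) by simp
qed

lemma secant_mult_eq_sum_lines_through:
  fixes S :: "('a::{finite,field} \<times> 'a \<times> 'a) set set"
  shows "secant_mult S Q = (\<Sum>l \<in> {l \<in> pg_lines. Q \<in> l}. card (l \<inter> S) choose 2)"
  unfolding secant_mult_def by (rule sum.mono_neutral_left) auto

lemma card_le_sum_lines_through:
  fixes T :: "('a::{finite,field} \<times> 'a \<times> 'a) set set"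
  assumes "Q \<in> pg_points" "Q \<notin> T" "T \<subseteq> pg_points"
  shows "card T \<le> (\<Sum>l \<in> {l \<in> pg_lines. Q \<in> l}. card (l \<inter> T))"
proof -
  have "T \<subseteq> (\<Union>l \<in> {l \<in> pg_lines. Q \<in> l}. l \<inter> T)"
  proof
    fix R assume "R \<in> T"
    then obtain l where "l \<in> pg_lines" "Q \<in> l" "R \<in> l"
      using pg_line_through_two_points[of Q R] assms by blast
    with \<open>R \<in> T\<close> show "R \<in> (\<Union>l \<in> {l \<in> pg_lines. Q \<in> l}. l \<inter> T)" by blast
  qed
  then have "card T \<le> card (\<Union>l \<in> {l \<in> pg_lines. Q \<in> l}. l \<inter> T)"
    by (intro card_mono) simp_all
  also have "\<dots> \<le> (\<Sum>l \<in> {l \<in> pg_lines. Q \<in> l}. card (l \<inter> T))"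
    by (rule card_UN_le) simp
  finally show ?thesis .
qed

lemma card_le_secant_mult_add:
  fixes T :: "('a::{finite,field} \<times> 'a \<times> 'a) set set"
  assumes "Q \<in> pg_points" "Q \<notin> T" "T \<subseteq> pg_points"
  shows "card T \<le> secant_mult T Q + CARD('a) + 1"
proof -
  let ?L = "{l \<in> pg_lines. Q \<in> l}"
  have "card T \<le> (\<Sum>l \<in> ?L. card (l \<inter> T))"
    by (rule card_le_sum_lines_through[OF assms])
  also have "\<dots> \<le> (\<Sum>l \<in> ?L. (card (l \<inter> T) choose 2) + 1)"
    by (intro sum_mono le_choose_two_add_one)
  also have "\<dots> = secant_mult T Q + card ?L"
    unfolding sum.distrib secant_mult_eq_sum_lines_through by simp
  also have "\<dots> \<le> secant_mult T Q + CARD('a) + 1"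
    using card_lines_through_le[OF assms(1)] by simp
  finally show ?thesis .
qed

lemma card_le_secant_mult_add_if_large:
  fixes T :: "('a::{finite,field} \<times> 'a \<times> 'a) set set"
  assumes "Q \<in> pg_points" "Q \<notin> T" "T \<subseteq> pg_points" "2 * CARD('a) + 3 \<le> card T"
  shows "card T \<le> secant_mult T Q + CARD('a)"
proof -
  let ?L = "{l \<in> pg_lines. Q \<in> l}"
  have cover: "card T \<le> (\<Sum>l \<in> ?L. card (l \<inter> T))"
    by (rule card_le_sum_lines_through[OF assms(1-3)])
  have lines: "card ?L \<le> CARD('a) + 1"
    by (rule card_lines_through_le[OF assms(1)])
  have "\<exists>l \<in> ?L. 3 \<le> card (l \<inter> T)"
  proof (rule ccontr)
    assume "\<not> ?thesis"
    then have "(\<Sum>l \<in> ?L. card (l \<inter> T)) \<le> (\<Sum>l \<in> ?L. 2)"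
      by (intro sum_mono) auto
    then show False using cover lines assms(4) by simp
  qed
  then have "\<exists>l \<in> ?L. card (l \<inter> T) < (card (l \<inter> T) choose 2) + 1"
    using less_choose_two_add_one by blast
  with le_choose_two_add_one
  have "(\<Sum>l \<in> ?L. card (l \<inter> T)) < (\<Sum>l \<in> ?L. (card (l \<inter> T) choose 2) + 1)"
    by (intro sum_strict_mono_ex1[OF finite]) blast+
  also have "\<dots> = secant_mult T Q + card ?L"
    unfolding sum.distrib secant_mult_eq_sum_lines_through by simp
  finally show ?thesis using cover lines by linarith
qed

lemma secant_mult_le:
  fixes S :: "('a::{finite,field} \<times> 'a \<times> 'a) set set"
  assumes "Q \<in> pg_points" "Q \<notin> S"
  shows "secant_mult S Q \<le> (CARD('a) + 1) * (CARD('a) choose 2)"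
proof -
  let ?L = "{l \<in> pg_lines. Q \<in> l}"
  have bound: "card (l \<inter> S) choose 2 \<le> CARD('a) choose 2" if "l \<in> ?L" for l
  proof (rule binomial_right_mono)
    have "card (l \<inter> S) \<le> card (l - {Q})"
      using assms(2) by (intro card_mono) auto
    also have "\<dots> \<le> CARD('a)"
      using that card_pg_line_le[of l] by simp
    finally show "card (l \<inter> S) \<le> CARD('a)" .
  qed
  have "secant_mult S Q = (\<Sum>l \<in> ?L. card (l \<inter> S) choose 2)"
    by (rule secant_mult_eq_sum_lines_through)
  also have "\<dots> \<le> (\<Sum>l \<in> ?L. CARD('a) choose 2)"
    by (rule sum_mono) (rule bound)
  also have "\<dots> = card ?L * (CARD('a) choose 2)" by simp
  also have "\<dots> \<le> (CARD('a) + 1) * (CARD('a) choose 2)"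
    by (intro mult_right_mono card_lines_through_le[OF assms(1)]) simp
  finally show ?thesis .
qed

section \<open>Large sets are saturating\<close>

lemma pg_spans_if_card_ge:
  fixes S :: "('a::{finite,field} \<times> 'a \<times> 'a) set set"
  assumes "CARD('a) + 2 \<le> card S"
  shows "pg_spans S"
  unfolding pg_spans_def
proof
  assume "\<exists>l \<in> pg_lines. S \<subseteq> l"
  then obtain l where "l \<in> pg_lines" "S \<subseteq> l" by blast
  then have "card S \<le> CARD('a) + 1"
    using card_mono[of l S] card_pg_line_le[of l] by simp
  with assms show False by simp
qed

lemma pg_spans_nonempty:
  assumes "pg_spans (S :: ('a::field \<times> 'a \<times> 'a) set set)"
  shows "S \<noteq> {}"
proof
  assume "S = {}"
  moreover have "line_of (1, 0, 0) \<in> (pg_lines :: ('a \<times> 'a \<times> 'a) set set set)"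
    unfolding pg_lines_eq by simp
  ultimately show False using assms unfolding pg_spans_def by blast
qed

lemma saturatingI:
  fixes T :: "('a::{finite,field} \<times> 'a \<times> 'a) set set"
  assumes "T \<subseteq> pg_points" "T \<noteq> pg_points" "CARD('a) + 2 \<le> card T"
    and "\<And>Q. Q \<in> pg_points \<Longrightarrow> Q \<notin> T \<Longrightarrow> \<mu> \<le> secant_mult T Q"
  shows "saturating \<mu> T"
  using assms pg_spans_if_card_ge[OF assms(3)] unfolding saturating_def by blast

lemma saturating_if_card_ge:
  fixes T :: "('a::{finite,field} \<times> 'a \<times> 'a) set set"
  assumes "T \<subseteq> pg_points" "T \<noteq> pg_points" "0 < \<mu>" "CARD('a) + \<mu> + 1 \<le> card T"
  shows "saturating \<mu> T"
proof (rule saturatingI[OF assms(1,2)])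
  show "CARD('a) + 2 \<le> card T" using assms(3,4) by simp
  fix Q assume "Q \<in> pg_points" "Q \<notin> T"
  then show "\<mu> \<le> secant_mult T Q"
    using card_le_secant_mult_add[OF _ _ assms(1)] assms(4) by fastforce
qed

lemma saturating_if_card_ge_large:
  fixes T :: "('a::{finite,field} \<times> 'a \<times> 'a) set set"
  assumes "T \<subseteq> pg_points" "T \<noteq> pg_points" "CARD('a) + 3 \<le> \<mu>" "CARD('a) + \<mu> \<le> card T"
  shows "saturating \<mu> T"
proof (rule saturatingI[OF assms(1,2)])
  show "CARD('a) + 2 \<le> card T" using assms(3,4) by simp
  fix Q assume "Q \<in> pg_points" "Q \<notin> T"
  then show "\<mu> \<le> secant_mult T Q"
    using card_le_secant_mult_add_if_large[OF _ _ assms(1)] assms(3,4) by fastforce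
qed

lemma minimal_saturating_remove:
  fixes S :: "('a::{finite,field} \<times> 'a \<times> 'a) set set"
  assumes "minimal_saturating \<mu> S" "P \<in> S"
  shows "\<not> saturating \<mu> (S - {P})"
  using assms card_Diff_singleton[OF assms(2)] unfolding minimal_saturating_def by blast

theorem proposition6p1:
  fixes S :: "('a::{finite,field} \<times> 'a \<times> 'a) set set" and \<mu> :: nat
    and q :: nat
  assumes "q = card (UNIV :: 'a set)" and "\<mu> > 0" and "minimal_saturating \<mu> S"
  shows "\<mu> \<le> (q + 1) * (q choose 2) \<and>
         (\<mu> \<le> q + 2 \<longrightarrow> card S \<le> q + \<mu> + 1) \<and>
         (\<mu> \<ge> q + 3 \<longrightarrow> card S \<le> min (q + \<mu>) (q^2 + q))"
proof -
  have S: "S \<subseteq> pg_points" "S \<noteq> pg_points" "pg_spans S"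
    and secants: "\<forall>Q \<in> pg_points - S. \<mu> \<le> secant_mult S Q"
    using assms(3) unfolding minimal_saturating_def saturating_def by auto
  obtain Q where Q: "Q \<in> pg_points" "Q \<notin> S" using S(1,2) by blast
  then have "\<mu> \<le> secant_mult S Q" using secants by blast
  also have "\<dots> \<le> (q + 1) * (q choose 2)" using secant_mult_le[OF Q] assms(1) by simp
  finally have part_i: "\<mu> \<le> (q + 1) * (q choose 2)" .
  obtain P where "P \<in> S" using pg_spans_nonempty[OF S(3)] by blast
  then have T: "S - {P} \<subseteq> pg_points" "S - {P} \<noteq> pg_points" "card (S - {P}) + 1 = card S"
    using S(1) card_Suc_Diff1[of S P] by auto
  have "\<not> saturating \<mu> (S - {P})" by (rule minimal_saturating_remove[OF assms(3) \<open>P \<in> S\<close>])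
  then have small: "card S \<le> q + \<mu> + 1" and small_large: "q + 3 \<le> \<mu> \<Longrightarrow> card S \<le> q + \<mu>"
    using saturating_if_card_ge[OF T(1,2) assms(2)] saturating_if_card_ge_large[OF T(1,2)] T(3) assms(1)
    by force+
  have "card S < card (pg_points :: ('a \<times> 'a \<times> 'a) set set)"
    using S(1,2) by (intro psubset_card_mono) auto
  then have "card S \<le> q^2 + q" using card_pg_points[where 'a='a] assms(1) by simp
  then show ?thesis using part_i small small_large by auto
qed

end
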